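(* Let $L=\{<,\ldots\}$ be a countable first order language containing a binary relation symbol $<$, and let $T$ be a complete $L$-theory with Skolem functions in which $<$ is interpreted as a linear order. Suppose $T$ satisfies the inaccessibility scheme. Let $M\models T$, let $\psi(\bar{x},\bar{t})$ be an $L$-formula and $\bar{b}\in M$ with $|\bar{b}|=|\bar{t}|$ such that $\psi(\bar{x},\bar{b})$ is $\bar{x}$-unbounded in $M$. Let $\varphi(\bar{x},\bar{t}')$ be an $L$-formula and $a\in M$. Then there is a tuple $\bar{c}\in M$ with $|\bar{c}|=|\bar{x}|$ such that $E_{\varphi}(\bar{x},\bar{c};a)\wedge\psi(\bar{x},\bar{b})$ is $\bar{x}$-unbounded in $M$.
   Context: For a formula $\varphi(\bar{x},\bar{t})$ and tuples $\bar{y}_0,\bar{y}_1$ of the same length as $\bar{x}$, write $E_{\varphi}(\bar{y}_0,\bar{y}_1;z_0)$ for the formula $(\forall \bar{t}<z_0)(\varphi(\bar{y}_0,\bar{t})\leftrightarrow\varphi(\bar{y}_1,\bar{t}))$; here $\bar{t}<z_0$ means every coordinate of $\bar{t}$ is $<z_0$. $T$ satisfies the inaccessibility scheme if for every formula $\varphi(\bar{x},\bar{t})$ of $L$ (with $\bar{x}$ a tuple of any finite length), $T\models (\forall z_0)(\exists z_1>z_0)(\forall\bar{y}_0)(\exists\bar{y}_1<z_1)E_{\varphi}(\bar{y}_0,\bar{y}_1;z_0)$. "$T$ has Skolem functions" means that for every formula $\theta(y,\bar{x})$ there is a term $\tau(\bar{x})$ of $L$ with $T\models \forall\bar{x}(\exists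 y\,\theta(y,\bar{x})\to\theta(\tau(\bar{x}),\bar{x}))$. For $\bar{x}=(x_1,\ldots,x_n)$ and a formula $\chi(\bar{x})$ with parameters from $M$, $\chi(\bar{x})$ is $\bar{x}$-unbounded in $M$ if $M\models(\forall\alpha_1)(\exists x_1>\alpha_1)(\forall\alpha_2)(\exists x_2>\alpha_2)\cdots(\forall\alpha_n)(\exists x_n>\alpha_n)\chi(\bar{x})$; otherwise it is $\bar{x}$-bounded. *)

theory Defs
  imports "HOL-Library.Countable_Set"
begin

text \<open>Constants are 0-ary function symbols.\<close>

datatype 'f trm = Var nat | Fn 'f "'f trm list"

datatype ('f, 'r) fm =
    Eq "'f trm" "'f trm"
  | Rl 'r "'f trm list"
  | Neg "('f, 'r) fm"
  | Conj "('f, 'r) fm" "('f, 'r) fm"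
  | Ex nat "('f, 'r) fm"

fun vars_trm :: "'f trm \<Rightarrow> nat set" where
  "vars_trm (Var v) = {v}"
| "vars_trm (Fn f ts) = (\<Union>t\<in>set ts. vars_trm t)"

fun fv :: "('f, 'r) fm \<Rightarrow> nat set" where
  "fv (Eq s t) = vars_trm s \<union> vars_trm t"
| "fv (Rl r ts) = (\<Union>t\<in>set ts. vars_trm t)"
| "fv (Neg p) = fv p"
| "fv (Conj p q) = fv p \<union> fv q"
| "fv (Ex v p) = fv p - {v}"

fun wf_trm :: "('f \<Rightarrow> nat) \<Rightarrow> 'f trm \<Rightarrow> bool" where
  "wf_trm fa (Var v) = True"
| "wf_trm fa (Fn f ts) = (length ts = fa f \<and> (\<forall>t\<in>set ts. wf_trm fa t))"

fun wf_fm :: "('f \<Rightarrow> nat) \<Rightarrow> ('r \<Rightarrow> nat) \<Rightarrow> ('f, 'r) fm \<Rightarrow> bool" where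
  "wf_fm fa ra (Eq s t) = (wf_trm fa s \<and> wf_trm fa t)"
| "wf_fm fa ra (Rl r ts) = (length ts = ra r \<and> (\<forall>t\<in>set ts. wf_trm fa t))"
| "wf_fm fa ra (Neg p) = wf_fm fa ra p"
| "wf_fm fa ra (Conj p q) = (wf_fm fa ra p \<and> wf_fm fa ra q)"
| "wf_fm fa ra (Ex v p) = wf_fm fa ra p"

definition sentence :: "('f \<Rightarrow> nat) \<Rightarrow> ('r \<Rightarrow> nat) \<Rightarrow> ('f, 'r) fm \<Rightarrow> bool" where
  "sentence fa ra p \<longleftrightarrow> wf_fm fa ra p \<and> fv p = {}"

record ('f, 'r, 'a) struct =
  sdom :: "'a set"
  sfun :: "'f \<Rightarrow> 'a list \<Rightarrow> 'a"
  srel :: "'r \<Rightarrow> 'a list \<Rightarrow> bool"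

definition is_struct :: "('f \<Rightarrow> nat) \<Rightarrow> ('f, 'r, 'a) struct \<Rightarrow> bool" where
  "is_struct fa N \<longleftrightarrow> sdom N \<noteq> {} \<and>
     (\<forall>f as. length as = fa f \<and> set as \<subseteq> sdom N \<longrightarrow> sfun N f as \<in> sdom N)"

fun eval :: "('f, 'r, 'a) struct \<Rightarrow> (nat \<Rightarrow> 'a) \<Rightarrow> 'f trm \<Rightarrow> 'a" where
  "eval N e (Var v) = e v"
| "eval N e (Fn f ts) = sfun N f (map (eval N e) ts)"

fun sat :: "('f, 'r, 'a) struct \<Rightarrow> (nat \<Rightarrow> 'a) \<Rightarrow> ('f, 'r) fm \<Rightarrow> bool" where
  "sat N e (Eq s t) = (eval N e s = eval N e t)"
| "sat N e (Rl r ts) = srel N r (map (eval N e) ts)"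
| "sat N e (Neg p) = (\<not> sat N e p)"
| "sat N e (Conj p q) = (sat N e p \<and> sat N e q)"
| "sat N e (Ex v p) = (\<exists>a\<in>sdom N. sat N (e(v := a)) p)"

definition env_in :: "('f, 'r, 'a) struct \<Rightarrow> (nat \<Rightarrow> 'a) \<Rightarrow> bool" where
  "env_in N e \<longleftrightarrow> range e \<subseteq> sdom N"

definition sat_sent :: "('f, 'r, 'a) struct \<Rightarrow> ('f, 'r) fm \<Rightarrow> bool" where
  "sat_sent N p \<longleftrightarrow> (\<forall>e. env_in N e \<longrightarrow> sat N e p)"

fun upd_list :: "(nat \<Rightarrow> 'a) \<Rightarrow> nat list \<Rightarrow> 'a list \<Rightarrow> nat \<Rightarrow> 'a" where
  "upd_list e (v # vs) (a # as) = (upd_list e vs as)(v := a)"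
| "upd_list e _ _ = e"

text \<open>p(vs) holds at the tuple as (other variables get an arbitrary element of the domain;
  irrelevant when fv p is contained in set vs).\<close>
definition sat_at :: "('f, 'r, 'a) struct \<Rightarrow> ('f, 'r) fm \<Rightarrow> nat list \<Rightarrow> 'a list \<Rightarrow> bool" where
  "sat_at N p vs as = sat N (upd_list (\<lambda>_. SOME d. d \<in> sdom N) vs as) p"

definition is_theory :: "('f \<Rightarrow> nat) \<Rightarrow> ('r \<Rightarrow> nat) \<Rightarrow> ('f, 'r) fm set \<Rightarrow> bool" where
  "is_theory fa ra T \<longleftrightarrow> (\<forall>p\<in>T. sentence fa ra p)"

definition model :: "('f \<Rightarrow> nat) \<Rightarrow> ('f, 'r) fm set \<Rightarrow> ('f, 'r, 'a) struct \<Rightarrow> bool" where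
  "model fa T N \<longleftrightarrow> is_struct fa N \<and> (\<forall>p\<in>T. sat_sent N p)"

text \<open>Semantic consequence, quantifying over all models whose carrier lives in the type 'a.\<close>
definition entails :: "'a itself \<Rightarrow> ('f \<Rightarrow> nat) \<Rightarrow> ('f, 'r) fm set \<Rightarrow> ('f, 'r) fm \<Rightarrow> bool" where
  "entails (_ :: 'a itself) fa T p \<longleftrightarrow>
     (\<forall>N :: ('f, 'r, 'a) struct. model fa T N \<longrightarrow> sat_sent N p)"

definition complete_theory :: "'a itself \<Rightarrow> ('f \<Rightarrow> nat) \<Rightarrow> ('r \<Rightarrow> nat) \<Rightarrow> ('f, 'r) fm set \<Rightarrow> bool" where
  "complete_theory A fa ra T \<longleftrightarrow>
     (\<forall>p. sentence fa ra p \<longrightarrow> entails A fa T p \<or> entails A fa T (Neg p))"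

definition linear_theory :: "'a itself \<Rightarrow> ('f \<Rightarrow> nat) \<Rightarrow> 'r \<Rightarrow> ('f, 'r) fm set \<Rightarrow> bool" where
  "linear_theory (_ :: 'a itself) fa lt T \<longleftrightarrow>
     (\<forall>N :: ('f, 'r, 'a) struct. model fa T N \<longrightarrow>
        (\<forall>x\<in>sdom N. \<not> srel N lt [x, x]) \<and>
        (\<forall>x\<in>sdom N. \<forall>y\<in>sdom N. \<forall>z\<in>sdom N. srel N lt [x, y] \<longrightarrow> srel N lt [y, z] \<longrightarrow> srel N lt [x, z]) \<and>
        (\<forall>x\<in>sdom N. \<forall>y\<in>sdom N. srel N lt [x, y] \<or> x = y \<or> srel N lt [y, x]))"

text \<open>Skolem functions: for every formula theta(y, xs) there is a term tau(xs) such that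
  T entails the universal closure of (Ex y theta) --> theta(tau(xs), xs)
  (written out semantically).\<close>
definition has_skolem :: "'a itself \<Rightarrow> ('f \<Rightarrow> nat) \<Rightarrow> ('r \<Rightarrow> nat) \<Rightarrow> ('f, 'r) fm set \<Rightarrow> bool" where
  "has_skolem (_ :: 'a itself) fa ra T \<longleftrightarrow>
     (\<forall>\<theta> y. wf_fm fa ra \<theta> \<longrightarrow>
        (\<exists>\<tau>. wf_trm fa \<tau> \<and> vars_trm \<tau> \<subseteq> fv \<theta> - {y} \<and>
          (\<forall>N :: ('f, 'r, 'a) struct. model fa T N \<longrightarrow>
            (\<forall>e. env_in N e \<longrightarrow>
               (\<exists>a\<in>sdom N. sat N (e(y := a)) \<theta>) \<longrightarrow> sat N (e(y := eval N e \<tau>)) \<theta>))))"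

definition E_phi :: "'r \<Rightarrow> ('f, 'r, 'a) struct \<Rightarrow> ('f, 'r) fm \<Rightarrow> nat list \<Rightarrow> nat list
     \<Rightarrow> 'a list \<Rightarrow> 'a list \<Rightarrow> 'a \<Rightarrow> bool" where
  "E_phi lt N \<phi> xs ts ys0 ys1 z0 \<longleftrightarrow>
     (\<forall>tv. length tv = length ts \<and> set tv \<subseteq> sdom N \<and> (\<forall>t\<in>set tv. srel N lt [t, z0]) \<longrightarrow>
        (sat_at N \<phi> (xs @ ts) (ys0 @ tv) \<longleftrightarrow> sat_at N \<phi> (xs @ ts) (ys1 @ tv)))"

text \<open>phi(xs, ts): xs and ts lists of pairwise distinct variables containing all free variables.\<close>
definition fm_in :: "('f \<Rightarrow> nat) \<Rightarrow> ('r \<Rightarrow> nat) \<Rightarrow> ('f, 'r) fm \<Rightarrow> nat list \<Rightarrow> nat list \<Rightarrow> bool" where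
  "fm_in fa ra \<phi> xs ts \<longleftrightarrow> wf_fm fa ra \<phi> \<and> distinct (xs @ ts) \<and> fv \<phi> \<subseteq> set xs \<union> set ts"

definition inaccessible :: "'a itself \<Rightarrow> ('f \<Rightarrow> nat) \<Rightarrow> ('r \<Rightarrow> nat) \<Rightarrow> 'r \<Rightarrow> ('f, 'r) fm set \<Rightarrow> bool" where
  "inaccessible (_ :: 'a itself) fa ra lt T \<longleftrightarrow>
     (\<forall>\<phi> xs ts. fm_in fa ra \<phi> xs ts \<longrightarrow>
       (\<forall>N :: ('f, 'r, 'a) struct. model fa T N \<longrightarrow>
         (\<forall>z0\<in>sdom N. \<exists>z1\<in>sdom N. srel N lt [z0, z1] \<and>
           (\<forall>ys0. length ys0 = length xs \<and> set ys0 \<subseteq> sdom N \<longrightarrow>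
             (\<exists>ys1. length ys1 = length xs \<and> set ys1 \<subseteq> sdom N \<and>
                (\<forall>y\<in>set ys1. srel N lt [y, z1]) \<and>
                E_phi lt N \<phi> xs ts ys0 ys1 z0)))))"

text \<open>unb N lt P acc k: (forall a1)(exists x1 > a1) ... (forall ak)(exists xk > ak) P(acc @ [x1..xk]).\<close>
fun unb :: "'r \<Rightarrow> ('f, 'r, 'a) struct \<Rightarrow> ('a list \<Rightarrow> bool) \<Rightarrow> 'a list \<Rightarrow> nat \<Rightarrow> bool" where
  "unb lt N P acc 0 = P acc"
| "unb lt N P acc (Suc k) =
     (\<forall>\<alpha>\<in>sdom N. \<exists>x\<in>sdom N. srel N lt [\<alpha>, x] \<and> unb lt N P (acc @ [x]) k)"

definition unbounded :: "'r \<Rightarrow> ('f, 'r, 'a) struct \<Rightarrow> nat \<Rightarrow> ('a list \<Rightarrow> bool) \<Rightarrow> bool" where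
  "unbounded lt N n P \<longleftrightarrow> unb lt N P [] n"

end

theory Submission
  imports Defs
begin

text \<open>Inaccessibility at a yields a bound z1 such that every tuple ys is E_phi-equivalent over a
  to some tuple c below z1. If the conclusion failed, then for each such c the definable set of ys
  with E_phi(ys, c; a) \<and> psi(ys, b) would be bounded, i.e. the opponent wins its unboundedness game.
  The opponent's winning bounds are definable from parameters below a common bound, so
  inaccessibility (applied to the formula defining a winning bound) lets him choose one bound that
  works for all c below z1 simultaneously. Since these sets cover psi(-, b), psi would be bounded.\<close>

lemma eval_cong: "(\<forall>v\<in>vars_trm t. e v = e' v) \<Longrightarrow> eval N e t = eval N e' t"
  by (induction t) (auto cong: map_cong)

lemma sat_cong: "(\<forall>v\<in>fv p. e v = e' v) \<Longrightarrow> sat N e p = sat N e' p"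
proof (induction p arbitrary: e e')
  case (Eq s t)
  then show ?case by (auto intro!: eval_cong arg_cong2[where f="(=)"])
next
  case (Rl r ts)
  have "map (eval N e) ts = map (eval N e') ts"
    using Rl.prems by (intro map_cong refl eval_cong) auto
  then show ?case by (simp only: sat.simps)
next
  case (Conj p q)
  then show ?case by (metis UnCI fv.simps(4) sat.simps(4))
next
  case (Ex v p)
  have "sat N (e(v:=a)) p = sat N (e'(v:=a)) p" for a
    using Ex.prems by (intro Ex.IH) auto
  then show ?case by simp
qed auto

lemma upd_list_notin: "v \<notin> set vs \<Longrightarrow> upd_list e vs as v = e v"
  by (induction e vs as rule: upd_list.induct) auto

lemma upd_list_mem: "upd_list e vs as v \<in> insert (e v) (set as)"
  by (induction e vs as rule: upd_list.induct) auto

lemma upd_list_agree: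
  "length as = length vs \<Longrightarrow> v \<in> set vs \<Longrightarrow> upd_list e vs as v = upd_list e' vs as v"
  by (induction e vs as rule: upd_list.induct) auto

lemma upd_list_fun_upd:
  assumes "v \<in> set vs" "length as = length vs"
  shows "upd_list (e(v := x)) vs as = upd_list e vs as"
proof
  fix w show "upd_list (e(v := x)) vs as w = upd_list e vs as w"
    using assms by (cases "w \<in> set vs") (auto simp: upd_list_notin intro: upd_list_agree)
qed

lemma upd_list_map_self: "v \<in> set vs \<Longrightarrow> upd_list e' vs (map e vs) v = e v"
  by (induction vs) auto

lemma upd_list_map_eq: "upd_list e vs (map e vs) = e"
  by (rule ext) (metis upd_list_map_self upd_list_notin)

lemma map_upd_list: "distinct vs \<Longrightarrow> length as = length vs \<Longrightarrow> map (upd_list e vs as) vs = as"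
proof (induction vs arbitrary: as)
  case (Cons v vs)
  then obtain b bs where as: "as = b # bs" by (cases as) auto
  have "map ((upd_list e vs bs)(v := b)) vs = map (upd_list e vs bs) vs"
    using Cons.prems by (intro map_cong) auto
  also have "\<dots> = bs"
    using Cons as by simp
  finally show ?case
    using as by (simp only: upd_list.simps list.map fun_upd_same)
qed simp

lemma map_fun_upd_take_Suc:
  assumes "distinct xs" "i < length xs"
  shows "map (e(xs ! i := x)) (take (Suc i) xs) = map e (take i xs) @ [x]"
proof -
  have "xs ! i \<notin> set (take i xs)"
  proof
    assume "xs ! i \<in> set (take i xs)"
    then obtain j where "j < i" "xs ! j = xs ! i" by (auto simp: in_set_conv_nth)
    then show False using assms nth_eq_iff_index_eq by fastforce
  qed
  then show ?thesis using assms by (simp add: take_Suc_conv_app_nth)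
qed

lemma env_in_fun_upd: "env_in N e \<Longrightarrow> a \<in> sdom N \<Longrightarrow> env_in N (e(v := a))"
  unfolding env_in_def by auto

lemma sat_at_map: "fv p \<subseteq> set vs \<Longrightarrow> sat_at N p vs (map e vs) = sat N e p"
  unfolding sat_at_def by (rule sat_cong) (auto simp: upd_list_map_self)

lemma ex_fresh_distinct_list:
  "finite (S :: nat set) \<Longrightarrow> \<exists>vs. length vs = n \<and> distinct vs \<and> set vs \<inter> S = {}"
  by (rule exI[of _ "[Suc (Max S)..<Suc (Max S) + n]"]) (auto dest: Max_ge)

section \<open>Definable predicates on environments\<close>

definition definable ::
  "('f \<Rightarrow> nat) \<Rightarrow> ('r \<Rightarrow> nat) \<Rightarrow> ('f, 'r, 'a) struct \<Rightarrow> nat set \<Rightarrow> ((nat \<Rightarrow> 'a) \<Rightarrow> bool) \<Rightarrow> bool"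
  where "definable fa ra N U Q \<longleftrightarrow>
    (\<exists>p. wf_fm fa ra p \<and> fv p \<subseteq> U \<and> (\<forall>e. env_in N e \<longrightarrow> sat N e p = Q e))"

lemma definable_agree:
  "definable fa ra N U Q \<Longrightarrow> env_in N e \<Longrightarrow> env_in N e' \<Longrightarrow> \<forall>v\<in>U. e v = e' v \<Longrightarrow> Q e = Q e'"
  unfolding definable_def by (metis sat_cong subsetD)

lemma definable_mono: "definable fa ra N U Q \<Longrightarrow> U \<subseteq> U' \<Longrightarrow> definable fa ra N U' Q"
  unfolding definable_def by blast

lemma definable_cong:
  "definable fa ra N U Q \<Longrightarrow> (\<And>e. env_in N e \<Longrightarrow> Q e = Q' e) \<Longrightarrow> definable fa ra N U Q'"
  unfolding definable_def by metis

lemma definable_sat: "wf_fm fa ra p \<Longrightarrow> fv p \<subseteq> U \<Longrightarrow> definable fa ra N U (\<lambda>e. sat N e p)"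
  unfolding definable_def by blast

lemma definable_Neg: "definable fa ra N U Q \<Longrightarrow> definable fa ra N U (\<lambda>e. \<not> Q e)"
  unfolding definable_def by (metis fv.simps(3) sat.simps(3) wf_fm.simps(3))

lemma definable_Conj:
  assumes "definable fa ra N U Q" "definable fa ra N U R"
  shows "definable fa ra N U (\<lambda>e. Q e \<and> R e)"
proof -
  obtain p q where "wf_fm fa ra p" "fv p \<subseteq> U" "\<forall>e. env_in N e \<longrightarrow> sat N e p = Q e"
    "wf_fm fa ra q" "fv q \<subseteq> U" "\<forall>e. env_in N e \<longrightarrow> sat N e q = R e"
    using assms unfolding definable_def by blast
  then show ?thesis unfolding definable_def by (intro exI[of _ "Conj p q"]) auto
qed

lemma definable_Ex:
  assumes "definable fa ra N U Q"
  shows "definable fa ra N (U - {v}) (\<lambda>e. \<exists>a\<in>sdom N. Q (e(v := a)))"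
proof -
  obtain p where "wf_fm fa ra p" "fv p \<subseteq> U" "\<forall>e. env_in N e \<longrightarrow> sat N e p = Q e"
    using assms unfolding definable_def by blast
  then show ?thesis unfolding definable_def by (intro exI[of _ "Ex v p"]) (auto simp: env_in_fun_upd)
qed

lemma definable_All:
  "definable fa ra N U Q \<Longrightarrow> definable fa ra N (U - {v}) (\<lambda>e. \<forall>a\<in>sdom N. Q (e(v := a)))"
  by (rule definable_cong[OF definable_Neg[OF definable_Ex[OF definable_Neg]]]) auto

lemma definable_imp:
  assumes "definable fa ra N U Q" "definable fa ra N U R"
  shows "definable fa ra N U (\<lambda>e. Q e \<longrightarrow> R e)"
  by (rule definable_cong[OF definable_Neg[OF definable_Conj[OF assms(1) definable_Neg[OF assms(2)]]]])
    auto

lemma definable_iff: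
  assumes "definable fa ra N U Q" "definable fa ra N U R"
  shows "definable fa ra N U (\<lambda>e. Q e \<longleftrightarrow> R e)"
  by (rule definable_cong[OF definable_Conj[OF definable_imp[OF assms] definable_imp[OF assms(2,1)]]])
    auto

lemma definable_lt: "ra lt = 2 \<Longrightarrow> definable fa ra N {u, w} (\<lambda>e. srel N lt [e u, e w])"
  unfolding definable_def by (intro exI[of _ "Rl lt [Var u, Var w]"]) auto

lemma definable_eq: "definable fa ra N {u, w} (\<lambda>e. e u = e w)"
  unfolding definable_def by (intro exI[of _ "Eq (Var u) (Var w)"]) auto

lemma definable_True: "definable fa ra N {u} (\<lambda>e. True)"
  unfolding definable_def by (intro exI[of _ "Eq (Var u) (Var u)"]) auto

lemma definable_All_list:
  "definable fa ra N U Q \<Longrightarrow> definable fa ra N (U - set vs)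
     (\<lambda>e. \<forall>tv. length tv = length vs \<and> set tv \<subseteq> sdom N \<longrightarrow> Q (upd_list e vs tv))"
proof (induction vs arbitrary: U Q)
  case Nil
  then show ?case by (auto elim: definable_cong)
next
  case (Cons v vs)
  have "definable fa ra N (U - {v} - set vs) (\<lambda>e. \<forall>tv. length tv = length vs \<and> set tv \<subseteq> sdom N \<longrightarrow>
      (\<forall>a\<in>sdom N. Q ((upd_list e vs tv)(v := a))))"
    using Cons.IH[OF definable_All[OF Cons.prems]] .
  moreover have "(\<forall>tv. length tv = length vs \<and> set tv \<subseteq> sdom N \<longrightarrow>
      (\<forall>a\<in>sdom N. Q ((upd_list e vs tv)(v := a)))) \<longleftrightarrow>
    (\<forall>tv. length tv = length (v # vs) \<and> set tv \<subseteq> sdom N \<longrightarrow> Q (upd_list e (v # vs) tv))" for e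
  proof
    assume "\<forall>tv. length tv = length vs \<and> set tv \<subseteq> sdom N \<longrightarrow>
      (\<forall>a\<in>sdom N. Q ((upd_list e vs tv)(v := a)))"
    then show "\<forall>tv. length tv = length (v # vs) \<and> set tv \<subseteq> sdom N \<longrightarrow> Q (upd_list e (v # vs) tv)"
      by (auto simp: length_Suc_conv)
  qed (metis insert_subset length_Cons list.set(2) upd_list.simps(1))
  ultimately show ?case by (auto intro: definable_mono definable_cong)
qed

lemma definable_subst1:
  assumes "definable fa ra N U Q" "v \<noteq> w"
  shows "definable fa ra N (U - {v} \<union> {w}) (\<lambda>e. Q (e(v := e w)))"
proof -
  have "definable fa ra N ((U \<union> {v, w}) - {v}) (\<lambda>e. \<exists>a\<in>sdom N. (e(v := a)) v = (e(v := a)) w \<and> Q (e(v := a)))"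
    by (intro definable_Ex definable_Conj definable_mono[OF definable_eq] definable_mono[OF assms(1)]) auto
  then show ?thesis
    by (rule definable_cong[OF definable_mono]) (use assms(2) in \<open>auto simp: env_in_def\<close>)
qed

lemma definable_subst:
  "definable fa ra N U Q \<Longrightarrow> length ws = length vs \<Longrightarrow> set ws \<inter> set vs = {} \<Longrightarrow>
   definable fa ra N (U - set vs \<union> set ws) (\<lambda>e. Q (upd_list e vs (map e ws)))"
proof (induction vs arbitrary: ws U Q)
  case Nil
  then show ?case by (auto elim: definable_cong)
next
  case (Cons v vs)
  then obtain w ws' where ws: "ws = w # ws'" by (cases ws) auto
  have "definable fa ra N (U - {v} \<union> {w}) (\<lambda>e. Q (e(v := e w)))"
    using Cons ws by (intro definable_subst1) auto
  then have "definable fa ra N (U - {v} \<union> {w} - set vs \<union> set ws')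
      (\<lambda>e. Q ((upd_list e vs (map e ws'))(v := upd_list e vs (map e ws') w)))"
    by (rule Cons.IH) (use Cons.prems ws in auto)
  then show ?case
  proof (rule definable_cong[OF definable_mono])
    have "w \<notin> set vs" using Cons.prems ws by auto
    then show "Q ((upd_list e vs (map e ws'))(v := upd_list e vs (map e ws') w)) =
      Q (upd_list e (v # vs) (map e ws))" for e
      using ws by (simp add: upd_list_notin)
  qed (use ws in auto)
qed

lemma definable_all_below:
  "ra lt = 2 \<Longrightarrow> definable fa ra N (insert A (set vs)) (\<lambda>e. \<forall>v\<in>set vs. srel N lt [e v, e A])"
proof (induction vs)
  case Nil
  show ?case by (rule definable_cong[OF definable_mono[OF definable_True]]) auto
next
  case (Cons v vs)
  have "definable fa ra N (insert A (set (v # vs)))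
      (\<lambda>e. srel N lt [e v, e A] \<and> (\<forall>v\<in>set vs. srel N lt [e v, e A]))"
    by (intro definable_Conj definable_mono[OF definable_lt[of ra lt, OF Cons.prems]]
        definable_mono[OF Cons.IH[OF Cons.prems]]) auto
  then show ?case by (rule definable_cong) auto
qed

lemma definable_ex_above:
  assumes "ra lt = 2" "definable fa ra N U W" "Y \<notin> U" "Y \<noteq> v"
  shows "definable fa ra N (insert Y U) (\<lambda>e. \<exists>x\<in>sdom N. srel N lt [e Y, x] \<and> W (e(v := x)))"
proof -
  have "definable fa ra N (insert Y (insert v U)) (\<lambda>e. srel N lt [e Y, e v] \<and> W e)"
    by (intro definable_Conj definable_mono[OF definable_lt[of ra lt, OF assms(1)]] definable_mono[OF assms(2)]) auto
  then have "definable fa ra N (insert Y (insert v U) - {v})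
      (\<lambda>e. \<exists>x\<in>sdom N. srel N lt [(e(v := x)) Y, (e(v := x)) v] \<and> W (e(v := x)))"
    by (rule definable_Ex)
  then show ?thesis
    by (rule definable_cong[OF definable_mono]) (use assms(4) in auto)
qed

lemma definable_E_phi:
  assumes lt: "ra lt = 2" and phi: "fm_in fa ra \<phi> xs ts'"
    and C: "length C = length xs" "set C \<inter> (set xs \<union> set ts') = {}"
  shows "definable fa ra N (set xs \<union> set C \<union> {A})
    (\<lambda>e. E_phi lt N \<phi> xs ts' (map e xs) (map e C) (e A))"
proof -
  have wf: "wf_fm fa ra \<phi>" and fv: "fv \<phi> \<subseteq> set (xs @ ts')" and dist: "distinct (xs @ ts')"
    using phi unfolding fm_in_def by auto
  txt \<open>Fresh variables T2 hold the tuple tv over which E_phi quantifies.\<close>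
  obtain T2 where T2: "length T2 = length ts'" "distinct T2"
    "set T2 \<inter> (set xs \<union> set ts' \<union> set C \<union> {A}) = {}"
    using ex_fresh_distinct_list[of "set xs \<union> set ts' \<union> set C \<union> {A}"] by auto
  define Q where "Q e \<longleftrightarrow> (\<forall>v\<in>set T2. srel N lt [e v, e A]) \<longrightarrow>
    (sat N (upd_list e ts' (map e T2)) \<phi> \<longleftrightarrow> sat N (upd_list e (xs @ ts') (map e (C @ T2))) \<phi>)" for e
  let ?W = "set xs \<union> set C \<union> {A} \<union> set T2"
  have "definable fa ra N ?W (\<lambda>e. sat N (upd_list e ts' (map e T2)) \<phi>)"
    by (rule definable_mono[OF definable_subst[OF definable_sat[OF wf]]]) (use fv T2 in auto)
  moreover have "definable fa ra N ?W (\<lambda>e. sat N (upd_list e (xs @ ts') (map e (C @ T2))) \<phi>)"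
    by (rule definable_mono[OF definable_subst[OF definable_sat[OF wf]]]) (use fv T2 C in auto)
  moreover have "definable fa ra N ?W (\<lambda>e. \<forall>v\<in>set T2. srel N lt [e v, e A])"
    by (rule definable_mono[OF definable_all_below[of ra lt, OF lt]]) auto
  ultimately have "definable fa ra N ?W Q"
    unfolding Q_def by (intro definable_imp definable_iff)
  then have D: "definable fa ra N (?W - set T2)
      (\<lambda>e. \<forall>tv. length tv = length T2 \<and> set tv \<subseteq> sdom N \<longrightarrow> Q (upd_list e T2 tv))"
    by (rule definable_All_list)
  have key: "Q (upd_list e T2 tv) \<longleftrightarrow> ((\<forall>t\<in>set tv. srel N lt [t, e A]) \<longrightarrow>
      (sat_at N \<phi> (xs @ ts') (map e xs @ tv) \<longleftrightarrow> sat_at N \<phi> (xs @ ts') (map e C @ tv)))"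
    if "length tv = length T2" for e tv
  proof -
    define e' where "e' = upd_list e T2 tv"
    have e'_T2: "map e' T2 = tv"
      unfolding e'_def by (rule map_upd_list[OF T2(2) that])
    have e'_e: "map e' xs = map e xs" "map e' C = map e C" "e' A = e A"
      unfolding e'_def using T2(3) by (auto intro!: upd_list_notin)
    have "map (upd_list e' ts' (map e' T2)) (xs @ ts') = map e xs @ tv"
      using dist T2(1) that by (auto simp: map_upd_list e'_T2 simp flip: e'_e(1) intro!: upd_list_notin)
    moreover have "map (upd_list e' (xs @ ts') (map e' (C @ T2))) (xs @ ts') = map e C @ tv"
      by (subst map_upd_list[OF dist]) (use T2(1) C(1) that in \<open>simp_all add: e'_T2 e'_e\<close>)
    ultimately show ?thesis
      unfolding Q_def e'_def[symmetric] using e'_T2 e'_e(3)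
      by (metis (no_types, lifting) sat_at_map[OF fv] image_iff list.set_map)
  qed
  show ?thesis
    by (rule definable_cong[OF definable_mono[OF D]]) (use T2 key in \<open>auto simp: E_phi_def\<close>)
qed

section \<open>Unboundedness games\<close>

text \<open>The game of unb read off an environment: the last k variables of xs are played, the others
  keep their values in e. Unlike unb, it is definable from B.\<close>

fun unb_env ::
  "'r \<Rightarrow> ('f, 'r, 'a) struct \<Rightarrow> ((nat \<Rightarrow> 'a) \<Rightarrow> bool) \<Rightarrow> nat list \<Rightarrow> nat \<Rightarrow> (nat \<Rightarrow> 'a) \<Rightarrow> bool"
  where
    "unb_env lt N B xs 0 e = B e"
  | "unb_env lt N B xs (Suc k) e = (\<forall>\<alpha>\<in>sdom N. \<exists>x\<in>sdom N. srel N lt [\<alpha>, x] \<and>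
       unb_env lt N B xs k (e(xs ! (length xs - Suc k) := x)))"

lemma unb_cong:
  "(\<And>ys. length ys = length acc + k \<Longrightarrow> P ys = Q ys) \<Longrightarrow> unb lt N P acc k = unb lt N Q acc k"
proof (induction k arbitrary: acc)
  case (Suc k)
  have "unb lt N P (acc @ [x]) k = unb lt N Q (acc @ [x]) k" for x
    by (rule Suc.IH) (use Suc.prems in simp)
  then show ?case by simp
qed simp

lemma unb_env_iff_unb:
  assumes "distinct xs" "k \<le> length xs"
  shows "unb_env lt N B xs k e =
    unb lt N (\<lambda>ys. B (upd_list e xs ys)) (map e (take (length xs - k) xs)) k"
  using assms(2)
proof (induction k arbitrary: e)
  case 0
  then show ?case by (simp add: upd_list_map_eq)
next
  case (Suc k)
  let ?i = "length xs - Suc k"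
  have i: "?i < length xs" "length xs - k = Suc ?i"
    using Suc.prems by auto
  have "unb_env lt N B xs k (e(xs ! ?i := x)) =
      unb lt N (\<lambda>ys. B (upd_list e xs ys)) (map e (take ?i xs) @ [x]) k" for x
  proof -
    have "unb_env lt N B xs k (e(xs ! ?i := x)) = unb lt N (\<lambda>ys. B (upd_list (e(xs ! ?i := x)) xs ys))
        (map e (take ?i xs) @ [x]) k"
      using Suc.IH[of "e(xs ! ?i := x)"] Suc.prems
      unfolding i(2) map_fun_upd_take_Suc[OF assms(1) i(1)] by (simp del: fun_upd_apply)
    also have "\<dots> = unb lt N (\<lambda>ys. B (upd_list e xs ys)) (map e (take ?i xs) @ [x]) k"
      by (rule unb_cong) (use i Suc.prems in \<open>simp add: upd_list_fun_upd\<close>)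
    finally show ?thesis .
  qed
  then show ?case by simp
qed

lemma definable_unb_env:
  assumes lt: "ra lt = 2" and U: "finite U" and B: "definable fa ra N U B"
  shows "definable fa ra N U (unb_env lt N B xs k)"
proof (induction k)
  case 0
  then show ?case using B by (auto elim: definable_cong)
next
  case (Suc k)
  let ?v = "xs ! (length xs - Suc k)"
  obtain Y where Y: "Y \<notin> insert ?v U"
    using U by (meson ex_new_if_finite finite_insert infinite_UNIV_nat)
  have "definable fa ra N (insert Y U - {Y}) (\<lambda>e. \<forall>\<alpha>\<in>sdom N. \<exists>x\<in>sdom N.
      srel N lt [(e(Y := \<alpha>)) Y, x] \<and> unb_env lt N B xs k ((e(Y := \<alpha>))(?v := x)))"
    by (rule definable_All[OF definable_ex_above[OF lt Suc]]) (use Y in auto)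
  then show ?case
  proof (rule definable_cong[OF definable_mono])
    fix e assume "env_in N e"
    then have "unb_env lt N B xs k ((e(Y := \<alpha>))(?v := x)) = unb_env lt N B xs k (e(?v := x))"
      if "\<alpha> \<in> sdom N" "x \<in> sdom N" for \<alpha> x
      by (intro definable_agree[OF Suc]) (use that Y in \<open>auto simp: env_in_def\<close>)
    then show "(\<forall>\<alpha>\<in>sdom N. \<exists>x\<in>sdom N. srel N lt [(e(Y := \<alpha>)) Y, x] \<and>
        unb_env lt N B xs k ((e(Y := \<alpha>))(?v := x))) = unb_env lt N B xs (Suc k) e"
      by auto
  qed (use Y in auto)
qed

locale inaccessible_model =
  fixes fa :: "'f \<Rightarrow> nat" and ra :: "'r \<Rightarrow> nat" and lt :: 'r
    and T :: "('f, 'r) fm set" and M :: "('f, 'r, 'a) struct"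
  assumes ra_lt: "ra lt = 2"
    and linear: "linear_theory TYPE('a) fa lt T"
    and inacc: "inaccessible TYPE('a) fa ra lt T"
    and model: "model fa T M"
begin

lemma lt_trans:
  "x \<in> sdom M \<Longrightarrow> y \<in> sdom M \<Longrightarrow> z \<in> sdom M \<Longrightarrow> srel M lt [x, y] \<Longrightarrow> srel M lt [y, z] \<Longrightarrow>
   srel M lt [x, z]"
  using linear model unfolding linear_theory_def by blast

lemma lt_total: "x \<in> sdom M \<Longrightarrow> y \<in> sdom M \<Longrightarrow> srel M lt [x, y] \<or> x = y \<or> srel M lt [y, x]"
  using linear model unfolding linear_theory_def by blast

lemma ex_upper_bound:
  assumes no_max: "\<forall>x\<in>sdom M. \<exists>y\<in>sdom M. srel M lt [x, y]"
  shows "finite F \<Longrightarrow> F \<subseteq> sdom M \<Longrightarrow> \<exists>z\<in>sdom M. \<forall>f\<in>F. srel M lt [f, z]"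
proof (induction F rule: finite_induct)
  case empty
  then show ?case using model unfolding model_def is_struct_def by blast
next
  case (insert x F)
  then obtain z where z: "z \<in> sdom M" "\<forall>f\<in>F. srel M lt [f, z]" by auto
  have x: "x \<in> sdom M" using insert.prems by simp
  show ?case
  proof (cases "srel M lt [x, z]")
    case True
    then show ?thesis using z by auto
  next
    case False
    obtain w where w: "w \<in> sdom M" "srel M lt [x, w]" using no_max x by auto
    then have "srel M lt [z, w]" using False lt_total[OF x z(1)] lt_trans[OF z(1) x w(1)] by auto
    then show ?thesis using z w insert.prems lt_trans[OF _ z(1) w(1)] by auto
  qed
qed

lemma uniform_refutation:
  assumes W: "definable fa ra M U W" and U: "finite U" and z: "z \<in> sdom M"
    and G: "\<And>g. g \<in> G \<Longrightarrow> env_in M g \<and> (\<forall>w\<in>U. srel M lt [g w, z])"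
    and refuted: "\<And>g. g \<in> G \<Longrightarrow> \<exists>\<alpha>\<in>sdom M. \<forall>x\<in>sdom M. srel M lt [\<alpha>, x] \<longrightarrow> \<not> W (g(v := x))"
  shows "\<exists>\<alpha>\<in>sdom M. \<forall>g\<in>G. \<forall>x\<in>sdom M. srel M lt [\<alpha>, x] \<longrightarrow> \<not> W (g(v := x))"
proof -
  obtain TS where TS: "set TS = U" "distinct TS"
    using U finite_distinct_list by blast
  obtain Y where Y: "Y \<notin> insert v U"
    using U by (meson ex_new_if_finite finite_insert infinite_UNIV_nat)
  define Q where "Q e \<longleftrightarrow> \<not> (\<exists>x\<in>sdom M. srel M lt [e Y, x] \<and> W (e(v := x)))" for e
  have Q_iff: "Q (g(Y := \<alpha>)) \<longleftrightarrow> (\<forall>x\<in>sdom M. srel M lt [\<alpha>, x] \<longrightarrow> \<not> W (g(v := x)))"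
    if "env_in M g" "\<alpha> \<in> sdom M" for g \<alpha>
  proof -
    have "W ((g(Y := \<alpha>))(v := x)) = W (g(v := x))" if "x \<in> sdom M" for x
      by (rule definable_agree[OF W]) (use \<open>env_in M g\<close> \<open>\<alpha> \<in> sdom M\<close> that Y in \<open>auto simp: env_in_def\<close>)
    then show ?thesis unfolding Q_def using Y by auto
  qed
  have "definable fa ra M (insert Y U) Q"
    unfolding Q_def using Y by (intro definable_Neg definable_ex_above[OF ra_lt W]) auto
  then obtain \<chi> where \<chi>: "fm_in fa ra \<chi> [Y] TS" "fv \<chi> \<subseteq> set (Y # TS)"
    "\<And>e. env_in M e \<Longrightarrow> sat M e \<chi> = Q e"
    unfolding definable_def fm_in_def using TS Y by auto
  txt \<open>The parameters of each g lie below z, so a refuting bound for g can be moved below z1.\<close>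
  obtain z1 where z1: "z1 \<in> sdom M" and rep: "\<And>ys0. length ys0 = 1 \<Longrightarrow> set ys0 \<subseteq> sdom M \<Longrightarrow>
      \<exists>ys1. length ys1 = 1 \<and> set ys1 \<subseteq> sdom M \<and> (\<forall>y\<in>set ys1. srel M lt [y, z1]) \<and>
        E_phi lt M \<chi> [Y] TS ys0 ys1 z"
    using inacc[unfolded inaccessible_def, rule_format, OF \<chi>(1) model z] by auto
  show ?thesis
  proof (rule bexI[OF _ z1], rule ballI)
    fix g assume "g \<in> G"
    then have g: "env_in M g" "\<forall>w\<in>U. srel M lt [g w, z]" and "\<exists>\<alpha>\<in>sdom M. Q (g(Y := \<alpha>))"
      using G refuted Q_iff by auto
    then obtain \<alpha> where \<alpha>: "\<alpha> \<in> sdom M" "Q (g(Y := \<alpha>))" by blast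
    obtain \<alpha>' where \<alpha>': "\<alpha>' \<in> sdom M" "srel M lt [\<alpha>', z1]" "E_phi lt M \<chi> [Y] TS [\<alpha>] [\<alpha>'] z"
      using rep[of "[\<alpha>]"] \<alpha>(1) by (auto simp: length_Suc_conv)
    have "length (map g TS) = length TS \<and> set (map g TS) \<subseteq> sdom M \<and>
        (\<forall>t\<in>set (map g TS). srel M lt [t, z])"
      using g TS(1) unfolding env_in_def by auto
    then have "sat_at M \<chi> (Y # TS) (\<alpha> # map g TS) = sat_at M \<chi> (Y # TS) (\<alpha>' # map g TS)"
      using \<alpha>'(3) unfolding E_phi_def by simp
    moreover have "map (g(Y := \<beta>)) (Y # TS) = \<beta> # map g TS" for \<beta>
      using Y TS(1) by auto
    ultimately have "sat M (g(Y := \<alpha>)) \<chi> = sat M (g(Y := \<alpha>')) \<chi>"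
      using sat_at_map[OF \<chi>(2)] by metis
    then have "Q (g(Y := \<alpha>'))"
      using \<alpha> \<alpha>'(1) \<chi>(3) g(1) env_in_fun_upd by metis
    then show "\<forall>x\<in>sdom M. srel M lt [z1, x] \<longrightarrow> \<not> W (g(v := x))"
      using Q_iff[OF g(1)] \<alpha>' z1 lt_trans by blast
  qed
qed

lemma extend_position:
  assumes xs: "distinct xs" "length acc < length xs"
    and x: "x \<in> sdom M" and z: "z \<in> sdom M" "srel M lt [z, z']" "srel M lt [x, z']" "z' \<in> sdom M"
    and g: "env_in M g" "\<forall>w\<in>U. srel M lt [g w, z]" "map g (take (length acc) xs) = acc"
  shows "env_in M (g(xs ! length acc := x)) \<and>
    (\<forall>w\<in>U. srel M lt [(g(xs ! length acc := x)) w, z']) \<and>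
    map (g(xs ! length acc := x)) (take (length (acc @ [x])) xs) = acc @ [x]"
proof (intro conjI ballI)
  show "env_in M (g(xs ! length acc := x))" using g(1) x by (rule env_in_fun_upd)
  show "srel M lt [(g(xs ! length acc := x)) w, z']" if "w \<in> U" for w
  proof (cases "w = xs ! length acc")
    case True
    then show ?thesis using z(3) by simp
  next
    case False
    have "g w \<in> sdom M" "srel M lt [g w, z]" using g that unfolding env_in_def by auto
    then show ?thesis using False lt_trans[OF _ z(1) z(4)] z(2) by simp
  qed
  show "map (g(xs ! length acc := x)) (take (length (acc @ [x])) xs) = acc @ [x]"
    unfolding length_append_singleton map_fun_upd_take_Suc[OF xs] g(3) ..
qed

text \<open>The opponent beats P by always playing a bound that refutes every g in G at once.\<close>

lemma not_unb_if_covered: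
  assumes no_max: "\<forall>x\<in>sdom M. \<exists>y\<in>sdom M. srel M lt [x, y]"
    and B: "definable fa ra M U B" and U: "finite U" and xs: "distinct xs"
    and len: "length acc + k = length xs" and acc: "set acc \<subseteq> sdom M" and z: "z \<in> sdom M"
    and G: "\<And>g. g \<in> G \<Longrightarrow>
      env_in M g \<and> (\<forall>w\<in>U. srel M lt [g w, z]) \<and> map g (take (length acc) xs) = acc"
    and lose: "\<And>g. g \<in> G \<Longrightarrow> \<not> unb_env lt M B xs k g"
    and cover: "\<And>ys. length ys = length xs \<Longrightarrow> set ys \<subseteq> sdom M \<Longrightarrow> P ys \<Longrightarrow>
      \<exists>g\<in>G. B (upd_list g xs ys)"
  shows "\<not> unb lt M P acc k"
  using len acc z G lose cover
proof (induction k arbitrary: acc z G)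
  case 0
  show ?case
  proof
    assume "unb lt M P acc 0"
    then obtain g where "g \<in> G" "B (upd_list g xs acc)"
      using "0.prems"(1,2,6) by force
    moreover have "upd_list g xs acc = g"
      using "0.prems"(4)[OF \<open>g \<in> G\<close>] "0.prems"(1) upd_list_map_eq by fastforce
    ultimately show False using "0.prems"(5) by fastforce
  qed
next
  case (Suc k)
  define v where "v = xs ! length acc"
  have i: "length acc < length xs" "length xs - Suc k = length acc"
    using Suc.prems(1) by auto
  have "\<exists>\<alpha>\<in>sdom M. \<forall>g\<in>G. \<forall>x\<in>sdom M.
      srel M lt [\<alpha>, x] \<longrightarrow> \<not> unb_env lt M B xs k (g(v := x))"
  proof (rule uniform_refutation[OF definable_unb_env[OF ra_lt U B] U Suc.prems(3)])
    show "env_in M g \<and> (\<forall>w\<in>U. srel M lt [g w, z])" if "g \<in> G" for g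
      using Suc.prems(4)[OF that] by blast
    show "\<exists>\<alpha>\<in>sdom M. \<forall>x\<in>sdom M. srel M lt [\<alpha>, x] \<longrightarrow> \<not> unb_env lt M B xs k (g(v := x))"
      if "g \<in> G" for g
      using Suc.prems(5)[OF that] unfolding unb_env.simps i(2) v_def by blast
  qed
  then obtain \<alpha> where \<alpha>: "\<alpha> \<in> sdom M"
    "\<forall>g\<in>G. \<forall>x\<in>sdom M. srel M lt [\<alpha>, x] \<longrightarrow> \<not> unb_env lt M B xs k (g(v := x))"
    by blast
  have "\<not> unb lt M P (acc @ [x]) k" if x: "x \<in> sdom M" "srel M lt [\<alpha>, x]" for x
  proof -
    obtain z' where z': "z' \<in> sdom M" "srel M lt [z, z']" "srel M lt [x, z']"
      using ex_upper_bound[OF no_max, of "{z, x}"] Suc.prems(3) x(1) by auto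
    show ?thesis
    proof (rule Suc.IH[where G = "(\<lambda>g. g(v := x)) ` G"])
      show "length (acc @ [x]) + k = length xs" using Suc.prems(1) by simp
      show "set (acc @ [x]) \<subseteq> sdom M" using Suc.prems(2) x(1) by simp
      show "z' \<in> sdom M" by (fact z'(1))
      show "\<not> unb_env lt M B xs k g'" if "g' \<in> (\<lambda>g. g(v := x)) ` G" for g'
        using that \<alpha>(2) x by blast
      show "\<exists>g'\<in>(\<lambda>g. g(v := x)) ` G. B (upd_list g' xs ys)"
        if ys: "length ys = length xs" "set ys \<subseteq> sdom M" "P ys" for ys
      proof -
        obtain g where "g \<in> G" "B (upd_list g xs ys)" using Suc.prems(6)[OF ys] by blast
        moreover have "v \<in> set xs" unfolding v_def using i(1) by simp
        ultimately show ?thesis using ys(1) by (auto simp: upd_list_fun_upd)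
      qed
      show "env_in M g' \<and> (\<forall>w\<in>U. srel M lt [g' w, z']) \<and>
          map g' (take (length (acc @ [x])) xs) = acc @ [x]"
        if "g' \<in> (\<lambda>g. g(v := x)) ` G" for g'
        using that extend_position[OF xs i(1) x(1) Suc.prems(3) z'(2,3,1)] Suc.prems(4)
        unfolding v_def by blast
    qed
  qed
  then show ?case using \<alpha>(1) by auto
qed

end

section \<open>Refining an unbounded set by an E_phi-class\<close>

text \<open>The fresh variables C and A carry the parameters cs and a of E_phi(ys, cs; a).\<close>

locale E_phi_refinement = inaccessible_model +
  fixes \<psi> \<phi> :: "('f, 'r) fm" and xs ts ts' C :: "nat list" and A :: nat
    and bs :: "'a list" and a :: 'a
  assumes psi: "fm_in fa ra \<psi> xs ts" and phi: "fm_in fa ra \<phi> xs ts'"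
    and bs: "length bs = length ts" "set bs \<subseteq> sdom M" and a: "a \<in> sdom M"
    and C: "length C = length xs" "distinct C" "set C \<inter> (set xs \<union> set ts \<union> set ts') = {}"
    and A: "A \<notin> set xs \<union> set ts \<union> set C"
begin

definition refines :: "(nat \<Rightarrow> 'a) \<Rightarrow> bool" where
  "refines e \<longleftrightarrow> E_phi lt M \<phi> xs ts' (map e xs) (map e C) (e A) \<and> sat M e \<psi>"

definition param_env :: "'a list \<Rightarrow> nat \<Rightarrow> 'a" where
  "param_env c = upd_list (\<lambda>_. a) (C @ A # ts) (c @ a # bs)"

lemma definable_refines: "definable fa ra M (set xs \<union> set C \<union> {A} \<union> set ts) refines"
  unfolding refines_def using psi C(1,3) unfolding fm_in_def
  by (intro definable_Conj definable_mono[OF definable_E_phi[OF ra_lt phi]]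
      definable_mono[OF definable_sat]) auto

lemma param_env:
  assumes "length c = length xs"
  shows "map (param_env c) C = c" "param_env c A = a" "map (param_env c) ts = bs"
proof -
  have "distinct (C @ A # ts)" using psi C A unfolding fm_in_def by auto
  then have "map (param_env c) C @ param_env c A # map (param_env c) ts = c @ a # bs"
    unfolding param_env_def using map_upd_list[of "C @ A # ts" "c @ a # bs"] assms C(1) bs(1) by simp
  then show "map (param_env c) C = c" "param_env c A = a" "map (param_env c) ts = bs"
    using assms C(1) by (simp_all add: append_eq_append_conv)
qed

lemma param_env_mem: "param_env c w \<in> insert a (set c \<union> set bs)"
  using upd_list_mem[of "\<lambda>_. a" "C @ A # ts" "c @ a # bs" w] unfolding param_env_def by auto

lemma param_env_below:
  assumes "\<forall>y\<in>insert a (set c \<union> set bs). srel M lt [y, z]"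
  shows "srel M lt [param_env c w, z]"
  using param_env_mem[of c w] assms by blast

lemma env_in_param_env:
  assumes "set c \<subseteq> sdom M"
  shows "env_in M (param_env c)"
  unfolding env_in_def
proof (rule image_subsetI)
  fix w show "param_env c w \<in> sdom M"
    using param_env_mem[of c w] assms a bs(2) by auto
qed

lemma refines_upd_param_env:
  assumes ys: "length ys = length xs" and c: "length c = length xs"
  shows "refines (upd_list (param_env c) xs ys) \<longleftrightarrow>
    E_phi lt M \<phi> xs ts' ys c a \<and> sat_at M \<psi> (xs @ ts) (ys @ bs)"
proof -
  let ?e = "upd_list (param_env c) xs ys"
  have dist: "distinct (xs @ ts)" and fv: "fv \<psi> \<subseteq> set (xs @ ts)"
    using psi unfolding fm_in_def by auto
  have "map ?e xs = ys"
    using dist ys by (simp add: map_upd_list)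
  moreover have "map ?e C = map (param_env c) C" "?e A = param_env c A"
      "map ?e ts = map (param_env c) ts"
    using C(3) A dist by (auto intro!: upd_list_notin)
  ultimately show ?thesis
    unfolding refines_def using sat_at_map[OF fv, of M ?e] by (simp add: param_env[OF c])
qed

lemma unb_env_param_env_iff:
  assumes "length c = length xs"
  shows "unb_env lt M refines xs (length xs) (param_env c) \<longleftrightarrow>
    unbounded lt M (length xs) (\<lambda>ys. E_phi lt M \<phi> xs ts' ys c a \<and> sat_at M \<psi> (xs @ ts) (ys @ bs))"
proof -
  have "distinct xs" using psi unfolding fm_in_def by simp
  then have "unb_env lt M refines xs (length xs) (param_env c) \<longleftrightarrow>
      unb lt M (\<lambda>ys. refines (upd_list (param_env c) xs ys)) [] (length xs)"
    using unb_env_iff_unb[OF _ order_refl] by simp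
  also have "\<dots> \<longleftrightarrow> unb lt M (\<lambda>ys. E_phi lt M \<phi> xs ts' ys c a \<and> sat_at M \<psi> (xs @ ts) (ys @ bs))
      [] (length xs)"
    by (rule unb_cong) (simp add: refines_upd_param_env assms)
  finally show ?thesis unfolding unbounded_def .
qed

lemma unbounded_refinement:
  assumes "xs \<noteq> []" and unb_psi: "unbounded lt M (length xs) (\<lambda>ys. sat_at M \<psi> (xs @ ts) (ys @ bs))"
  shows "\<exists>cs. length cs = length xs \<and> set cs \<subseteq> sdom M \<and> unbounded lt M (length xs)
    (\<lambda>ys. E_phi lt M \<phi> xs ts' ys cs a \<and> sat_at M \<psi> (xs @ ts) (ys @ bs))"
proof (rule ccontr)
  assume no: "\<not> ?thesis"
  have no_max: "\<forall>x\<in>sdom M. \<exists>y\<in>sdom M. srel M lt [x, y]"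
    using unb_psi \<open>xs \<noteq> []\<close> unfolding unbounded_def by (cases xs) auto
  obtain z1 where z1: "z1 \<in> sdom M" and rep: "\<And>ys. length ys = length xs \<Longrightarrow> set ys \<subseteq> sdom M \<Longrightarrow>
      \<exists>c. length c = length xs \<and> set c \<subseteq> sdom M \<and> (\<forall>y\<in>set c. srel M lt [y, z1]) \<and>
        E_phi lt M \<phi> xs ts' ys c a"
    using inacc[unfolded inaccessible_def, rule_format, OF phi model a] by blast
  define Reps where "Reps = {c. length c = length xs \<and> set c \<subseteq> sdom M \<and> (\<forall>y\<in>set c. srel M lt [y, z1])}"
  obtain z where z: "z \<in> sdom M" "\<forall>f\<in>insert a (insert z1 (set bs)). srel M lt [f, z]"
    using ex_upper_bound[OF no_max, of "insert a (insert z1 (set bs))"] a z1 bs(2) by auto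
  have "\<not> unb lt M (\<lambda>ys. sat_at M \<psi> (xs @ ts) (ys @ bs)) [] (length xs)"
  proof (rule not_unb_if_covered[OF no_max definable_refines _ _ _ _ z(1), where G = "param_env ` Reps"])
    show "distinct xs" using psi unfolding fm_in_def by simp
    show "env_in M g \<and> (\<forall>w\<in>set xs \<union> set C \<union> {A} \<union> set ts. srel M lt [g w, z]) \<and>
        map g (take (length []) xs) = []" if g: "g \<in> param_env ` Reps" for g
    proof -
      obtain c where c: "c \<in> Reps" "g = param_env c" using g by blast
      then have "\<forall>y\<in>insert a (set c \<union> set bs). srel M lt [y, z]"
        using z lt_trans[OF _ z1 z(1)] by (auto simp: Reps_def)
      then show ?thesis using c param_env_below env_in_param_env by (auto simp: Reps_def)
    qed
    show "\<not> unb_env lt M refines xs (length xs) g" if "g \<in> param_env ` Reps" for g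
      using that no unb_env_param_env_iff by (auto simp: Reps_def)
    show "\<exists>g\<in>param_env ` Reps. refines (upd_list g xs ys)"
      if "length ys = length xs" "set ys \<subseteq> sdom M" "sat_at M \<psi> (xs @ ts) (ys @ bs)" for ys
      using rep[OF that(1,2)] that refines_upd_param_env by (auto simp: Reps_def)
  qed auto
  then show False using unb_psi unfolding unbounded_def by simp
qed

end

theorem proposition2p2:
  fixes fa :: "'f \<Rightarrow> nat" and ra :: "'r \<Rightarrow> nat" and lt :: 'r
    and T :: "('f, 'r) fm set" and M :: "('f, 'r, 'a) struct"
    and \<psi> \<phi> :: "('f, 'r) fm" and xs ts ts' :: "nat list"
    and bs :: "'a list" and a :: 'a
  assumes "countable (UNIV :: 'f set)" and "countable (UNIV :: 'r set)"
    and "ra lt = 2"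
    and "is_theory fa ra T"
    and "complete_theory TYPE('a) fa ra T"
    and "linear_theory TYPE('a) fa lt T"
    and "has_skolem TYPE('a) fa ra T"
    and "inaccessible TYPE('a) fa ra lt T"
    and "model fa T M"
    and "fm_in fa ra \<psi> xs ts"
    and "length bs = length ts" and "set bs \<subseteq> sdom M"
    and "unbounded lt M (length xs) (\<lambda>ys. sat_at M \<psi> (xs @ ts) (ys @ bs))"
    and "fm_in fa ra \<phi> xs ts'"
    and "a \<in> sdom M"
  shows "\<exists>cs. length cs = length xs \<and> set cs \<subseteq> sdom M \<and>
           unbounded lt M (length xs)
             (\<lambda>ys. E_phi lt M \<phi> xs ts' ys cs a \<and> sat_at M \<psi> (xs @ ts) (ys @ bs))"
proof (cases "xs = []")
  case True
  then show ?thesis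
    using assms(13) by (intro exI[of _ "[]"]) (auto simp: unbounded_def E_phi_def)
next
  case False
  obtain C where C: "length C = length xs" "distinct C" "set C \<inter> (set xs \<union> set ts \<union> set ts') = {}"
    using ex_fresh_distinct_list[of "set xs \<union> set ts \<union> set ts'"] by auto
  obtain A where A: "A \<notin> set xs \<union> set ts \<union> set C"
    by (meson ex_new_if_finite finite_Un finite_set infinite_UNIV_nat)
  interpret E_phi_refinement fa ra lt T M \<psi> \<phi> xs ts ts' C A bs a
    using assms C A by unfold_locales auto
  show ?thesis
    using unbounded_refinement[OF False assms(13)] .
qed

end
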